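(* Let $k$ be an algebraically closed field, let $\lambda=(\lambda_1\ge\lambda_2\ge\dots)$ be a partition of $n$ (with $\lambda_j=0$ for $j$ beyond its length), and let $X\in\mathfrak{gl}_n(k)$ be a nilpotent matrix whose Jordan block sizes are given by $\lambda$. Let $1\le i\le n-1$. (i) Every $i$-dimensional subspace $W$ of $V=k^n$ contains an $X$-invariant subspace $U$ with $\dim U\ge\sum_{j>n-i}\lambda_j$. (ii) The upper-left $i\times i$ submatrix $X_{\le i,\le i}$ of $X$ has stable rank at most $d_{\lambda,i}:=i-\sum_{j>n-i}\lambda_j$. *)

theory Defs
  imports "Jordan_Normal_Form.Jordan_Normal_Form" "Jordan_Normal_Form.DL_Rank_Submatrix"
    "HOL-Computational_Algebra.Polynomial"
begin

definition is_subspace :: "nat \<Rightarrow> 'a::field vec set \<Rightarrow> bool" where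
  "is_subspace n W \<longleftrightarrow> subspace class_ring W (module_vec TYPE('a) n)"

definition sub_dim :: "nat \<Rightarrow> 'a::field vec set \<Rightarrow> nat" where
  "sub_dim n W = vectorspace.dim class_ring ((module_vec TYPE('a) n)\<lparr>carrier := W\<rparr>)"

definition mat_rank :: "'a::field mat \<Rightarrow> nat" where
  "mat_rank A = vec_space.rank (dim_row A) A"

definition stable_rank :: "'a::field mat \<Rightarrow> nat" where
  "stable_rank A = (THE r. \<exists>N. \<forall>m\<ge>N. mat_rank (A ^\<^sub>m m) = r)"

(* a partition of n, given by its nonzero parts in weakly decreasing order;
   lambda_j = ls ! (j-1) for 1 <= j <= length ls, and 0 beyond *)
definition is_partition :: "nat list \<Rightarrow> nat \<Rightarrow> bool" where
  "is_partition ls n \<longleftrightarrow> sorted_wrt (\<ge>) ls \<and> 0 \<notin> set ls \<and> sum_list ls = n"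

end

theory Submission
  imports Defs "Jordan_Normal_Form.Jordan_Normal_Form_Uniqueness"
begin

text \<open>
  Let \<open>U\<close> be the largest \<open>X\<close>-invariant subspace of \<open>W\<close>, i.e. the vectors whose whole \<open>X\<close>-orbit
  lies in \<open>W\<close>. Measure a subspace \<open>S\<close> by the codimension of \<open>S \<inter> U\<close> in \<open>S\<close>. Applying \<open>X\<close> lowers
  this quantity by at most \<open>codim W\<close>, and passing from \<open>im X\<^sup>t\<close> to \<open>im X\<^sup>t\<^sup>+\<^sup>1\<close> lowers it by at most
  \<open>dim im X\<^sup>t - dim im X\<^sup>t\<^sup>+\<^sup>1 = #{j. \<lambda>\<^sub>j > t}\<close>. Telescoping from \<open>im X\<^sup>0 = V\<close> down to
  \<open>im X\<^sup>K = 0\<close> gives \<open>codim U \<le> \<Sum>\<^sub>t min (n - i) #{j. \<lambda>\<^sub>j > t} = \<lambda>\<^sub>1 + \<dots> + \<lambda>\<^sub>n\<^sub>-\<^sub>i\<close>, which is (i).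

  For (ii), take \<open>W\<close> spanned by the first \<open>i\<close> coordinate vectors. Truncation to the first \<open>i\<close>
  coordinates is injective on \<open>U\<close> and intertwines \<open>X\<close> on \<open>U\<close> with the leading submatrix \<open>Y\<close>;
  as \<open>X\<close> is nilpotent, the image of \<open>U\<close> lies in the kernel of every large power of \<open>Y\<close>.
\<close>

lemma is_subspaceI:
  fixes W :: "'a::field vec set"
  assumes "W \<subseteq> carrier_vec n" "0\<^sub>v n \<in> W" "\<And>x y. x \<in> W \<Longrightarrow> y \<in> W \<Longrightarrow> x + y \<in> W"
    "\<And>c x. x \<in> W \<Longrightarrow> c \<cdot>\<^sub>v x \<in> W"
  shows "is_subspace n W"
proof -
  interpret vec_space "TYPE('a)" n .
  show ?thesis unfolding is_subspace_def subspace_def submodule_def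
    using assms vectorspace_axioms vec_module[where ?'a='a and n=n] by auto
qed

lemma is_subspaceD:
  fixes W :: "'a::field vec set"
  assumes "is_subspace n W"
  shows "W \<subseteq> carrier_vec n" "0\<^sub>v n \<in> W" "\<And>x y. x \<in> W \<Longrightarrow> y \<in> W \<Longrightarrow> x + y \<in> W"
    "\<And>c x. x \<in> W \<Longrightarrow> c \<cdot>\<^sub>v x \<in> W"
proof -
  interpret vec_space "TYPE('a)" n .
  from assms have "submodule class_ring W V" unfolding is_subspace_def subspace_def by auto
  then show "W \<subseteq> carrier_vec n" "0\<^sub>v n \<in> W" "\<And>x y. x \<in> W \<Longrightarrow> y \<in> W \<Longrightarrow> x + y \<in> W"
    "\<And>c x. x \<in> W \<Longrightarrow> c \<cdot>\<^sub>v x \<in> W" unfolding submodule_def by auto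
qed

lemma is_subspace_carrier_vec: "is_subspace n (carrier_vec n :: 'a::field vec set)"
  by (rule is_subspaceI) auto

lemma is_subspace_Int:
  fixes A W :: "'a::field vec set"
  assumes "is_subspace n A" "is_subspace n W"
  shows "is_subspace n (A \<inter> W)"
  using is_subspaceD[OF assms(1)] is_subspaceD[OF assms(2)] by (intro is_subspaceI) auto

lemma is_subspace_fin_dim:
  fixes W :: "'a::field vec set"
  assumes "is_subspace n W"
  shows "vectorspace.fin_dim class_ring (module_vec TYPE('a) n\<lparr>carrier := W\<rparr>)"
proof -
  interpret vec_space "TYPE('a)" n .
  have sW: "subspace class_ring W V" using assms unfolding is_subspace_def by auto
  interpret W: vectorspace class_ring "vs W" using subspace_is_vs[OF sW] .
  have subm: "submodule class_ring W V" using sW unfolding subspace_def by auto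
  have bound: "finite S \<and> card S \<le> n" if "S \<subseteq> carrier (vs W) \<and> W.lin_indpt S" for S
  proof -
    have SW: "S \<subseteq> W" using that by auto
    have "lin_indpt S" using that span_li_not_depend(2)[OF SW subm] by auto
    moreover have "S \<subseteq> carrier V" using SW sW unfolding subspace_def submodule_def by auto
    ultimately show ?thesis using li_le_dim[OF fin_dim] dim_is_n by auto
  qed
  have "W.lin_indpt {}" unfolding W.lin_dep_def by auto
  then have "\<exists>A. finite A \<and> maximal A (\<lambda>S. S \<subseteq> carrier (vs W) \<and> W.lin_indpt S)"
    by (intro maximal_exists[where N=n and B="{}"]) (use bound in auto)
  then obtain A where A: "finite A" "maximal A (\<lambda>S. S \<subseteq> carrier (vs W) \<and> W.lin_indpt S)"
    by blast
  have "W.gen_set A" by (rule W.max_li_is_gen[OF A(2)])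
  moreover have "A \<subseteq> carrier (vs W)" using A(2) unfolding maximal_def by auto
  ultimately show ?thesis unfolding W.fin_dim_def using A(1) by auto
qed

lemma sub_dim_mono:
  fixes A B :: "'a::field vec set"
  assumes A: "is_subspace n A" and B: "is_subspace n B" and AB: "A \<subseteq> B"
  shows "sub_dim n A \<le> sub_dim n B"
proof -
  interpret vec_space "TYPE('a)" n .
  have sA: "subspace class_ring A V" and sB: "subspace class_ring B V"
    using A B unfolding is_subspace_def by auto
  interpret B: vectorspace class_ring "vs B" using subspace_is_vs[OF sB] .
  have "subspace class_ring A (vs B)" by (rule nested_subspaces[OF sB sA AB])
  from B.subspace_dim[OF this] is_subspace_fin_dim[OF A] is_subspace_fin_dim[OF B]
  show ?thesis unfolding sub_dim_def by simp
qed

lemma sub_dim_carrier_vec: "sub_dim n (carrier_vec n :: 'a::field vec set) = n"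
proof -
  interpret vec_space "TYPE('a)" n .
  have e: "vs (carrier_vec n) = V" by (simp add: module_vec_def)
  show ?thesis unfolding sub_dim_def e by (rule dim_is_n)
qed

lemma sub_dim_le:
  fixes W :: "'a::field vec set"
  assumes "is_subspace n W"
  shows "sub_dim n W \<le> n"
  using sub_dim_mono[OF assms is_subspace_carrier_vec] is_subspaceD(1)[OF assms]
  by (simp add: sub_dim_carrier_vec)

lemma sub_dim_zero: "sub_dim n {0\<^sub>v n :: 'a::field vec} = 0"
proof -
  interpret vec_space "TYPE('a)" n .
  have "span {} = {0\<^sub>v n}" using span_empty by simp
  then show ?thesis using dim_zero_vs unfolding sub_dim_def by simp
qed

lemma is_subspace_obtain_basis:
  fixes W :: "'a::field vec set"
  assumes W: "is_subspace n W"
  obtains B where "finite B" "B \<subseteq> W" "module.lin_indpt class_ring (module_vec TYPE('a) n) B"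
    "module.span class_ring (module_vec TYPE('a) n) B = W" "card B = sub_dim n W"
proof -
  interpret vec_space "TYPE('a)" n .
  have sW: "subspace class_ring W V" using W unfolding is_subspace_def by auto
  have subm: "submodule class_ring W V" using sW unfolding subspace_def by auto
  interpret W: vectorspace class_ring "vs W" using subspace_is_vs[OF sW] .
  obtain B where B: "finite B" "W.basis B"
    using W.finite_basis_exists is_subspace_fin_dim[OF W] by auto
  have BW: "B \<subseteq> W" using B(2) unfolding W.basis_def by auto
  have "lin_indpt B" using B(2) span_li_not_depend(2)[OF BW subm] unfolding W.basis_def by auto
  moreover have "span B = W" using B(2) span_li_not_depend(1)[OF BW subm] unfolding W.basis_def by auto
  moreover have "card B = sub_dim n W" unfolding sub_dim_def using W.dim_basis[OF B] by simp
  ultimately show ?thesis using that B BW by auto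
qed

lemma (in vec_space) lin_indpt_extend_within:
  assumes B: "B \<subseteq> carrier_vec n" "lin_indpt B" and S: "finite S" "S \<subseteq> carrier_vec n"
  obtains C where "C \<subseteq> S" "C \<inter> B = {}" "lin_indpt (B \<union> C)" "S \<subseteq> span (B \<union> C)"
proof -
  let ?P = "\<lambda>C. C \<subseteq> S \<and> lin_indpt (B \<union> C) \<and> C \<inter> B = {}"
  obtain C where "maximal C ?P"
    using maximal_exists_superset[of S ?P "{}"] S(1) B(2) by auto
  then have C: "?P C" and max: "\<And>C'. ?P C' \<Longrightarrow> C \<subseteq> C' \<Longrightarrow> C' = C"
    unfolding maximal_def by blast+
  have BC: "B \<union> C \<subseteq> carrier_vec n" using B(1) S(2) C by auto
  have "b \<in> span (B \<union> C)" if b: "b \<in> S" for b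
  proof (cases "b \<in> B \<union> C")
    case True
    then show ?thesis using in_own_span[OF BC] by auto
  next
    case False
    show ?thesis
    proof (rule ccontr)
      assume "b \<notin> span (B \<union> C)"
      moreover have "b \<in> carrier_vec n" using b S(2) by auto
      ultimately have "lin_indpt (B \<union> C \<union> {b})"
        using lin_dep_iff_in_span[OF BC _ _ False] C by auto
      then have "?P (insert b C)" using b C False by auto
      then show False using max[of "insert b C"] False by auto
    qed
  qed
  then have "S \<subseteq> span (B \<union> C)" by blast
  with C that show ?thesis by blast
qed

lemma sub_dim_Int_ge:
  fixes A W :: "'a::field vec set"
  assumes A: "is_subspace n A" and W: "is_subspace n W"
  shows "sub_dim n A + sub_dim n W \<le> sub_dim n (A \<inter> W) + n"
proof -
  interpret vec_space "TYPE('a)" n .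
  obtain BW where BW: "finite BW" "BW \<subseteq> W" "lin_indpt BW" "span BW = W" "card BW = sub_dim n W"
    using is_subspace_obtain_basis[OF W] by blast
  obtain BA where BA: "finite BA" "BA \<subseteq> A" "lin_indpt BA" "span BA = A" "card BA = sub_dim n A"
    using is_subspace_obtain_basis[OF A] by blast
  have Wc: "W \<subseteq> carrier_vec n" and Ac: "A \<subseteq> carrier_vec n"
    using is_subspaceD(1)[OF W] is_subspaceD(1)[OF A] by auto
  have sA: "submodule class_ring A V" using A unfolding is_subspace_def subspace_def by auto
  have BWc: "BW \<subseteq> carrier_vec n" and BAc: "BA \<subseteq> carrier_vec n" using BW(2) BA(2) Wc Ac by auto
  obtain C where C: "C \<subseteq> BA" "C \<inter> BW = {}" "lin_indpt (BW \<union> C)" "BA \<subseteq> span (BW \<union> C)"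
    by (rule lin_indpt_extend_within[OF BWc BW(3) BA(1) BAc])
  have finC: "finite C" using C(1) BA(1) finite_subset by blast
  have BWC: "BW \<union> C \<subseteq> carrier_vec n" and Cc: "C \<subseteq> carrier_vec n"
    using BW(2) C(1) BA(2) Wc Ac by auto
  have "card (BW \<union> C) \<le> n" using li_le_dim(2)[OF fin_dim BWC C(3)] dim_is_n by simp
  then have card: "card BW + card C \<le> n"
    using C(2) BW(1) finC by (simp add: card_Un_disjoint inf_commute)
  have spanC_A: "span C \<subseteq> A" using span_is_subset[OF _ sA] C(1) BA(2) by auto
  \<comment> \<open>\<open>A = (A \<inter> W) + span C\<close>: the \<open>W\<close>-component of \<open>a \<in> A\<close> lies in \<open>A\<close> too.\<close>
  have A_sub: "A \<subseteq> submodule_sum (A \<inter> W) (span C)"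
  proof
    fix a assume a: "a \<in> A"
    have "a \<in> span (BW \<union> C)"
      using span_is_subset[OF C(4) span_is_submodule[OF BWC]] BA(4) a by auto
    also have "\<dots> = submodule_sum (span BW) (span C)"
      by (rule span_union_is_sum) (use BWC in auto)
    finally obtain w c where wc: "w \<in> W" "c \<in> span C" "a = w + c"
      unfolding submodule_sum_def BW(4) by auto
    have cA: "c \<in> A" using wc spanC_A by auto
    have "w \<in> carrier_vec n" "c \<in> carrier_vec n" using wc(1) Wc cA Ac by auto
    then have "w = a + (-1) \<cdot>\<^sub>v c" using wc(3) by auto
    then have "w \<in> A" using is_subspaceD(3,4)[OF A] a cA by auto
    then show "a \<in> submodule_sum (A \<inter> W) (span C)" unfolding submodule_sum_def using wc by auto
  qed
  have sAW: "is_subspace n (A \<inter> W)" by (rule is_subspace_Int[OF A W])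
  have sC: "is_subspace n (span C)" unfolding is_subspace_def using span_is_subspace[OF Cc] by auto
  have sub_AW: "subspace class_ring (A \<inter> W) V" and sub_C: "subspace class_ring (span C) V"
    using sAW sC unfolding is_subspace_def by auto
  have "sub_dim n A \<le> sub_dim n (submodule_sum (A \<inter> W) (span C))"
    by (rule sub_dim_mono[OF A _ A_sub]) (simp add: is_subspace_def sum_is_subspace[OF sub_AW sub_C])
  also have "\<dots> \<le> sub_dim n (A \<inter> W) + sub_dim n (span C)"
    unfolding sub_dim_def
    by (rule dim_subadditive[OF sub_AW is_subspace_fin_dim[OF sAW] sub_C is_subspace_fin_dim[OF sC]])
  also have "sub_dim n (span C) \<le> card C"
  proof -
    interpret SC: vectorspace class_ring "vs (span C)" using subspace_is_vs[OF sub_C] .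
    have CS: "C \<subseteq> span C" using in_own_span[OF Cc] .
    have "SC.gen_set C" using span_li_not_depend(1)[OF CS span_is_submodule[OF Cc]] by simp
    then show ?thesis using SC.gen_ge_dim[OF finC] CS unfolding sub_dim_def by auto
  qed
  finally show ?thesis using card BW(5) BA(5) by simp
qed

lemma mult_mat_zero_vec:
  fixes A :: "'a::semiring_1 mat"
  shows "A \<in> carrier_mat m n \<Longrightarrow> A *\<^sub>v 0\<^sub>v n = 0\<^sub>v m"
  by (intro eq_vecI) (auto simp: mult_mat_vec_def scalar_prod_def)

lemma zero_mat_mult_vec: "v \<in> carrier_vec n \<Longrightarrow> 0\<^sub>m m n *\<^sub>v v = (0\<^sub>v m :: 'a::semiring_0 vec)"
  by (intro eq_vecI) (auto simp: mult_mat_vec_def scalar_prod_def)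

lemma is_subspace_image:
  fixes Y :: "'a::field mat"
  assumes Y: "Y \<in> carrier_mat m n" and S: "is_subspace n S"
  shows "is_subspace m ((\<lambda>v. Y *\<^sub>v v) ` S)"
proof (rule is_subspaceI)
  note SD = is_subspaceD[OF S]
  have SC: "\<And>x. x \<in> S \<Longrightarrow> x \<in> carrier_vec n" using SD(1) by auto
  show "(\<lambda>v. Y *\<^sub>v v) ` S \<subseteq> carrier_vec m" using Y SD(1) by auto
  show "0\<^sub>v m \<in> (\<lambda>v. Y *\<^sub>v v) ` S"
    using SD(2) mult_mat_zero_vec[OF Y] by (intro image_eqI[of _ _ "0\<^sub>v n"]) auto
  show "x + y \<in> (\<lambda>v. Y *\<^sub>v v) ` S" if xy: "x \<in> (\<lambda>v. Y *\<^sub>v v) ` S" "y \<in> (\<lambda>v. Y *\<^sub>v v) ` S" for x y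
  proof -
    obtain a b where "a \<in> S" "b \<in> S" "x = Y *\<^sub>v a" "y = Y *\<^sub>v b" using xy by auto
    then show ?thesis
      using SD Y by (intro image_eqI[of _ _ "a + b"]) (auto simp: mult_add_distrib_mat_vec SC)
  qed
  show "c \<cdot>\<^sub>v x \<in> (\<lambda>v. Y *\<^sub>v v) ` S" if x: "x \<in> (\<lambda>v. Y *\<^sub>v v) ` S" for c x
  proof -
    obtain a where "a \<in> S" "x = Y *\<^sub>v a" using x by auto
    then show ?thesis
      using SD Y by (intro image_eqI[of _ _ "c \<cdot>\<^sub>v a"]) (auto simp: mult_mat_vec SC)
  qed
qed

lemma is_subspace_zero: "is_subspace n {0\<^sub>v n :: 'a::field vec}"
  by (rule is_subspaceI) auto

lemma is_subspace_preimage: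
  fixes Y :: "'a::field mat"
  assumes Y: "Y \<in> carrier_mat m n" and S: "is_subspace n S" and T: "is_subspace m T"
  shows "is_subspace n {v \<in> S. Y *\<^sub>v v \<in> T}"
  using is_subspaceD[OF S] is_subspaceD[OF T] Y mult_mat_zero_vec[OF Y]
  by (intro is_subspaceI) (auto simp: mult_add_distrib_mat_vec mult_mat_vec subset_iff)

lemma is_subspace_mat_kernel:
  fixes A :: "'a::field mat"
  assumes A: "A \<in> carrier_mat m n"
  shows "is_subspace n (mat_kernel A)"
proof -
  have "mat_kernel A = {v \<in> carrier_vec n. A *\<^sub>v v \<in> {0\<^sub>v m}}" unfolding mat_kernel_def using A by auto
  then show ?thesis using is_subspace_preimage[OF A is_subspace_carrier_vec is_subspace_zero] by simp
qed

lemma sub_dim_image_add_kernel: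
  fixes Y :: "'a::field mat"
  assumes Y: "Y \<in> carrier_mat m n" and S: "is_subspace n S"
  shows "sub_dim m ((\<lambda>v. Y *\<^sub>v v) ` S) + sub_dim n {v \<in> S. Y *\<^sub>v v = 0\<^sub>v m} = sub_dim n S"
proof -
  note SD = is_subspaceD[OF S]
  have SC: "\<And>x. x \<in> S \<Longrightarrow> x \<in> carrier_vec n" using SD(1) by auto
  interpret N: vec_space "TYPE('a)" n .
  interpret M: vec_space "TYPE('a)" m .
  have sS: "subspace class_ring S N.V" using S unfolding is_subspace_def by auto
  interpret NS: vectorspace class_ring "N.vs S" using N.subspace_is_vs[OF sS] .
  have "linear_map class_ring (N.vs S) M.V (\<lambda>v. Y *\<^sub>v v)"
    unfolding linear_map_def mod_hom_def mod_hom_axioms_def module_hom_def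
    using NS.vectorspace_axioms M.vectorspace_axioms NS.module_axioms M.module_axioms
      SD Y by (auto simp: mult_add_distrib_mat_vec mult_mat_vec SC)
  then interpret L: linear_map class_ring "N.vs S" M.V "\<lambda>v. Y *\<^sub>v v" .
  have "vectorspace.dim class_ring (M.vs L.imT) + vectorspace.dim class_ring (NS.vs L.kerT) = NS.dim"
    by (rule L.rank_nullity) (use is_subspace_fin_dim[OF S] in simp)
  moreover have "L.imT = (\<lambda>v. Y *\<^sub>v v) ` S"
    unfolding mod_hom.im_def[OF L.mod_hom_axioms] by simp
  moreover have "L.kerT = {v \<in> S. Y *\<^sub>v v = 0\<^sub>v m}"
    unfolding mod_hom.ker_def[OF L.mod_hom_axioms] by simp
  ultimately show ?thesis unfolding sub_dim_def by simp
qed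

lemma kernel_dim_eq_sub_dim: "kernel_dim (A :: 'a::field mat) = sub_dim (dim_col A) (mat_kernel A)"
  unfolding kernel_dim_def sub_dim_def by simp

lemma mat_rank_eq_sub_dim_image:
  fixes A :: "'a::field mat"
  assumes A: "A \<in> carrier_mat m k"
  shows "mat_rank A = sub_dim m ((\<lambda>v. A *\<^sub>v v) ` carrier_vec k)"
proof -
  interpret vec_space "TYPE('a)" m .
  have "span (set (cols A)) = (\<lambda>v. A *\<^sub>v v) ` carrier_vec k"
    using col_space_eq[OF A] A unfolding col_space_def by auto
  then have "rank A = sub_dim m ((\<lambda>v. A *\<^sub>v v) ` carrier_vec k)"
    unfolding rank_def sub_dim_def by simp
  then show ?thesis unfolding mat_rank_def using A by simp
qed

lemma mat_rank_add_kernel_dim: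
  fixes A :: "'a::field mat"
  assumes A: "A \<in> carrier_mat m k"
  shows "mat_rank A + kernel_dim A = k"
proof -
  have "mat_kernel A = {v \<in> carrier_vec k. A *\<^sub>v v = 0\<^sub>v m}" unfolding mat_kernel_def using A by auto
  moreover have "dim_col A = k" using A by simp
  ultimately have "kernel_dim A = sub_dim k {v \<in> carrier_vec k. A *\<^sub>v v = 0\<^sub>v m}"
    by (simp add: kernel_dim_eq_sub_dim)
  then show ?thesis
    using sub_dim_image_add_kernel[OF A is_subspace_carrier_vec] mat_rank_eq_sub_dim_image[OF A]
    unfolding sub_dim_carrier_vec by simp
qed

lemma pow_mat_Suc_left:
  fixes A :: "'a::semiring_1 mat"
  assumes A: "A \<in> carrier_mat n n"
  shows "A ^\<^sub>m Suc k = A * A ^\<^sub>m k"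
proof (induction k)
  case (Suc k)
  have "A ^\<^sub>m Suc (Suc k) = (A * A ^\<^sub>m k) * A" using Suc by simp
  also have "\<dots> = A * (A ^\<^sub>m k * A)" using A by (intro assoc_mult_mat) auto
  finally show ?case by simp
qed (use A in simp)

lemma pow_mat_mult_vec_Suc:
  fixes A :: "'a::semiring_1 mat"
  assumes A: "A \<in> carrier_mat n n" and v: "v \<in> carrier_vec n"
  shows "A ^\<^sub>m Suc k *\<^sub>v v = A ^\<^sub>m k *\<^sub>v (A *\<^sub>v v)"
    and "A ^\<^sub>m Suc k *\<^sub>v v = A *\<^sub>v (A ^\<^sub>m k *\<^sub>v v)"
proof -
  show "A ^\<^sub>m Suc k *\<^sub>v v = A ^\<^sub>m k *\<^sub>v (A *\<^sub>v v)"
    using assoc_mult_mat_vec[OF pow_carrier_mat[OF A] A v, of k] by simp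
  have "A ^\<^sub>m Suc k *\<^sub>v v = (A * A ^\<^sub>m k) *\<^sub>v v" by (simp only: pow_mat_Suc_left[OF A])
  also have "\<dots> = A *\<^sub>v (A ^\<^sub>m k *\<^sub>v v)" by (rule assoc_mult_mat_vec[OF A pow_carrier_mat[OF A] v])
  finally show "A ^\<^sub>m Suc k *\<^sub>v v = A *\<^sub>v (A ^\<^sub>m k *\<^sub>v v)" .
qed

section \<open>The largest invariant subspace of a subspace\<close>

definition invariant_core :: "'a::semiring_1 mat \<Rightarrow> nat \<Rightarrow> 'a vec set \<Rightarrow> 'a vec set" where
  "invariant_core X n W = {v \<in> carrier_vec n. \<forall>k. X ^\<^sub>m k *\<^sub>v v \<in> W}"

context
  fixes X :: "'a::field mat" and n :: nat and W :: "'a vec set"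
  assumes X: "X \<in> carrier_mat n n" and W: "is_subspace n W"
begin

lemma is_subspace_invariant_core: "is_subspace n (invariant_core X n W)"
proof -
  note WD = is_subspaceD[OF W]
  have "X ^\<^sub>m k *\<^sub>v 0\<^sub>v n \<in> W" for k
    using WD(2) mult_mat_zero_vec[OF pow_carrier_mat[OF X]] by simp
  then show ?thesis unfolding invariant_core_def using X WD(3,4)
    by (intro is_subspaceI) (auto simp: mult_add_distrib_mat_vec[of _ n n] mult_mat_vec[of _ n n])
qed

lemma invariant_core_subset: "invariant_core X n W \<subseteq> W"
proof
  fix v assume "v \<in> invariant_core X n W"
  then have "X ^\<^sub>m 0 *\<^sub>v v \<in> W" "v \<in> carrier_vec n" unfolding invariant_core_def by blast+
  then show "v \<in> W" using X by simp
qed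

lemma mem_invariant_core_iff:
  assumes v: "v \<in> carrier_vec n"
  shows "v \<in> invariant_core X n W \<longleftrightarrow> v \<in> W \<and> X *\<^sub>v v \<in> invariant_core X n W"
proof -
  have "X ^\<^sub>m k *\<^sub>v v \<in> W \<longleftrightarrow> (case k of 0 \<Rightarrow> v \<in> W | Suc j \<Rightarrow> X ^\<^sub>m j *\<^sub>v (X *\<^sub>v v) \<in> W)" for k
    using X v pow_mat_mult_vec_Suc(1)[OF X v] by (cases k) (auto simp del: pow_mat.simps(2))
  then have "(\<forall>k. X ^\<^sub>m k *\<^sub>v v \<in> W) \<longleftrightarrow> v \<in> W \<and> (\<forall>j. X ^\<^sub>m j *\<^sub>v (X *\<^sub>v v) \<in> W)"
    by (metis nat.case old.nat.exhaust)
  then show ?thesis using X v unfolding invariant_core_def by auto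
qed

lemma invariant_core_closed: "u \<in> invariant_core X n W \<Longrightarrow> X *\<^sub>v u \<in> invariant_core X n W"
  using mem_invariant_core_iff unfolding invariant_core_def by auto

definition core_defect :: "'a vec set \<Rightarrow> int" where
  "core_defect S = int (sub_dim n S) - int (sub_dim n (S \<inter> invariant_core X n W))"

lemma core_defect_image_ge:
  assumes S: "is_subspace n S"
  shows "core_defect ((\<lambda>v. X *\<^sub>v v) ` S) \<ge> core_defect S - int (n - sub_dim n W)"
proof -
  let ?U = "invariant_core X n W"
  define A where "A = {a \<in> S. X *\<^sub>v a \<in> ?U}"
  have A: "is_subspace n A"
    unfolding A_def by (rule is_subspace_preimage[OF X S is_subspace_invariant_core])
  have "(\<lambda>v. X *\<^sub>v v) ` A = (\<lambda>v. X *\<^sub>v v) ` S \<inter> ?U" unfolding A_def by auto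
  moreover have "{v \<in> A. X *\<^sub>v v = 0\<^sub>v n} = {v \<in> S. X *\<^sub>v v = 0\<^sub>v n}"
    unfolding A_def using is_subspaceD(2)[OF is_subspace_invariant_core] by auto
  \<comment> \<open>\<open>A \<inter> W = S \<inter> U\<close> has codimension at most \<open>codim W\<close> in \<open>A\<close>.\<close>
  moreover have "A \<inter> W = S \<inter> ?U"
    unfolding A_def using mem_invariant_core_iff is_subspaceD(1)[OF S] by auto
  then have "sub_dim n A + sub_dim n W \<le> sub_dim n (S \<inter> ?U) + n"
    using sub_dim_Int_ge[OF A W] by simp
  ultimately show ?thesis
    using sub_dim_image_add_kernel[OF X S] sub_dim_image_add_kernel[OF X A] sub_dim_le[OF W]
    unfolding core_defect_def by simp
qed

lemma core_defect_diff_le: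
  assumes S: "is_subspace n S" and T: "is_subspace n T" and TS: "T \<subseteq> S"
  shows "core_defect S - core_defect T \<le> int (sub_dim n S) - int (sub_dim n T)"
proof -
  have "sub_dim n (T \<inter> invariant_core X n W) \<le> sub_dim n (S \<inter> invariant_core X n W)"
    using TS by (intro sub_dim_mono is_subspace_Int is_subspace_invariant_core S T) auto
  then show ?thesis unfolding core_defect_def by simp
qed

definition pow_image :: "nat \<Rightarrow> 'a vec set" where
  "pow_image t = (\<lambda>v. X ^\<^sub>m t *\<^sub>v v) ` carrier_vec n"

lemma is_subspace_pow_image: "is_subspace n (pow_image t)"
  unfolding pow_image_def by (rule is_subspace_image[OF pow_carrier_mat[OF X] is_subspace_carrier_vec])

lemma pow_image_Suc: "pow_image (Suc t) = (\<lambda>v. X *\<^sub>v v) ` pow_image t"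
  unfolding pow_image_def using pow_mat_mult_vec_Suc(2)[OF X] by (auto simp del: pow_mat.simps)

lemma pow_image_Suc_subset: "pow_image (Suc t) \<subseteq> pow_image t"
  unfolding pow_image_def using pow_mat_mult_vec_Suc(1)[OF X] X by (auto simp del: pow_mat.simps)

lemma sub_dim_pow_image: "sub_dim n (pow_image t) = mat_rank (X ^\<^sub>m t)"
  unfolding pow_image_def by (rule mat_rank_eq_sub_dim_image[OF pow_carrier_mat[OF X], symmetric])

lemma codim_invariant_core_le:
  assumes nilp: "X ^\<^sub>m K = 0\<^sub>m n n"
  shows "int n - int (sub_dim n (invariant_core X n W))
    \<le> (\<Sum>t<K. min (int (n - sub_dim n W)) (int (mat_rank (X ^\<^sub>m t)) - int (mat_rank (X ^\<^sub>m Suc t))))"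
proof -
  have step: "core_defect (pow_image t) - core_defect (pow_image (Suc t))
      \<le> min (int (n - sub_dim n W)) (int (mat_rank (X ^\<^sub>m t)) - int (mat_rank (X ^\<^sub>m Suc t)))" for t
    using core_defect_image_ge[OF is_subspace_pow_image[of t]]
      core_defect_diff_le[OF is_subspace_pow_image[of t] is_subspace_pow_image[of "Suc t"] pow_image_Suc_subset]
    unfolding pow_image_Suc[symmetric] sub_dim_pow_image by simp
  have telescope: "core_defect (pow_image 0) - core_defect (pow_image T)
      \<le> (\<Sum>t<T. min (int (n - sub_dim n W)) (int (mat_rank (X ^\<^sub>m t)) - int (mat_rank (X ^\<^sub>m Suc t))))" for T
  proof (induction T)
    case (Suc T)
    then show ?case unfolding sum.lessThan_Suc using step[of T] by linarith
  qed simp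
  have "pow_image 0 = carrier_vec n" unfolding pow_image_def using X by auto
  then have "core_defect (pow_image 0) = int n - int (sub_dim n (invariant_core X n W))"
    unfolding core_defect_def using is_subspaceD(1)[OF is_subspace_invariant_core]
    by (simp add: Int_absorb1 sub_dim_carrier_vec)
  moreover have "pow_image K = {0\<^sub>v n}" unfolding pow_image_def nilp
  proof (intro equalityI subsetI)
    fix x :: "'a vec" assume "x \<in> (\<lambda>v. 0\<^sub>m n n *\<^sub>v v) ` carrier_vec n"
    then show "x \<in> {0\<^sub>v n}" by auto
  next
    fix x :: "'a vec" assume "x \<in> {0\<^sub>v n}"
    then show "x \<in> (\<lambda>v. 0\<^sub>m n n *\<^sub>v v) ` carrier_vec n"
      using mult_mat_zero_vec[of "0\<^sub>m n n" n n] by (intro image_eqI[where x="0\<^sub>v n"]) auto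
  qed
  then have "core_defect (pow_image K) = 0"
    unfolding core_defect_def using is_subspaceD(2)[OF is_subspace_invariant_core] by (simp add: Int_absorb2)
  ultimately show ?thesis using telescope[of K] by simp
qed

end

section \<open>Kernels of powers of a nilpotent matrix in Jordan normal form\<close>

lemma jordan_nf_sum_block_sizes:
  assumes X: "X \<in> carrier_mat n n" and jnf: "jordan_nf X n_as"
  shows "sum_list (map fst n_as) = n"
proof -
  obtain m P Q where "{X, jordan_matrix n_as, P, Q} \<subseteq> carrier_mat m m"
    using similar_matD jnf unfolding jordan_nf_def by blast
  then have "dim_row (jordan_matrix n_as) = dim_row X" by auto
  then show ?thesis using X by simp
qed

lemma sum_list_filter_ge_imp_all:
  fixes f g :: "'b \<Rightarrow> nat"
  assumes "\<And>x. x \<in> set xs \<Longrightarrow> 0 < f x" and "\<And>x. x \<in> set xs \<Longrightarrow> g x \<le> f x"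
    and "sum_list (map f xs) \<le> sum_list (map g (filter P xs))"
  shows "\<forall>x\<in>set xs. P x"
  using assms
proof (induction xs)
  case (Cons a xs)
  show ?case
  proof (cases "P a")
    case True
    then have "sum_list (map f xs) \<le> sum_list (map g (filter P xs))"
      using Cons.prems(2)[of a] Cons.prems(3) by simp
    then have "\<forall>x\<in>set xs. P x" using Cons.prems(1,2) by (intro Cons.IH) auto
    then show ?thesis using True by simp
  next
    case False
    have "sum_list (map g (filter P xs)) \<le> sum_list (map f (filter P xs))"
      using Cons.prems(2) by (intro sum_list_mono) auto
    also have "\<dots> \<le> sum_list (map f xs)" by (rule sum_list_filter_le_nat)
    finally show ?thesis using False Cons.prems(1)[of a] Cons.prems(3) by simp
  qed
qed simp

lemma kernel_dim_zero_mat: "kernel_dim (0\<^sub>m n n :: 'a::field mat) = n"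
proof -
  have "mat_kernel (0\<^sub>m n n :: 'a mat) = carrier_vec n"
    unfolding mat_kernel_def using zero_mat_mult_vec by auto
  then show ?thesis unfolding kernel_dim_eq_sub_dim by (simp add: sub_dim_carrier_vec)
qed

lemma kernel_dim_pow_nilpotent:
  fixes X :: "'a::field mat"
  assumes X: "X \<in> carrier_mat n n" and nilp: "X ^\<^sub>m K = 0\<^sub>m n n"
    and jnf: "jordan_nf X n_as" and blocks: "mset (map fst n_as) = mset ls"
  shows "kernel_dim (X ^\<^sub>m t) = sum_list (map (min t) ls)"
proof -
  have "char_matrix X 0 = X" unfolding char_matrix_def using X by (intro eq_matI) auto
  then have gen_eig: "kernel_dim (X ^\<^sub>m k)
      = sum_list (map (\<lambda>x. min k (fst x)) (filter (\<lambda>x. snd x = 0) n_as))" for k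
    using dim_gen_eigenspace[OF jnf, of 0 k] unfolding dim_gen_eigenspace_def
    by (simp add: case_prod_beta' comp_def)
  \<comment> \<open>All of \<open>k\<^sup>n\<close> is a generalised 0-eigenspace, so every Jordan block has eigenvalue 0.\<close>
  have "sum_list (map fst n_as) = kernel_dim (X ^\<^sub>m K)"
    using nilp kernel_dim_zero_mat[of n, where 'a='a] jordan_nf_sum_block_sizes[OF X jnf] by simp
  then have "sum_list (map fst n_as) \<le> sum_list (map (\<lambda>x. min K (fst x)) (filter (\<lambda>x. snd x = 0) n_as))"
    using gen_eig[of K] by simp
  moreover have "\<And>x. x \<in> set n_as \<Longrightarrow> 0 < fst x" using jnf unfolding jordan_nf_def by force
  ultimately have "\<forall>x\<in>set n_as. snd x = 0"
    by (intro sum_list_filter_ge_imp_all[where g="\<lambda>x. min K (fst x)"]) auto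
  then have "filter (\<lambda>x. snd x = 0) n_as = n_as" by simp
  then have "kernel_dim (X ^\<^sub>m t) = sum_list (map (min t) (map fst n_as))"
    using gen_eig[of t] by (simp add: comp_def)
  also have "\<dots> = sum_list (map (min t) ls)" by (metis blocks mset_map sum_mset_sum_list)
  finally show ?thesis .
qed

lemma sum_list_min_Suc:
  "sum_list (map (min (Suc t)) (xs :: nat list)) = sum_list (map (min t) xs) + length (filter (\<lambda>l. t < l) xs)"
  by (induction xs) auto

lemma sum_length_filter_less:
  "(\<Sum>t<T. length (filter (\<lambda>l. t < l) (xs :: nat list))) = sum_list (map (min T) xs)"
  by (induction T) (simp_all add: sum_list_min_Suc)

lemma length_filter_less_take:
  assumes "sorted_wrt (\<ge>) (xs :: nat list)"
  shows "length (filter (\<lambda>l. t < l) (take m xs)) = min m (length (filter (\<lambda>l. t < l) xs))"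
  using assms
proof (induction xs arbitrary: m)
  case (Cons a xs)
  show ?case
  proof (cases m)
    case (Suc m')
    show ?thesis
    proof (cases "t < a")
      case False
      then have "\<forall>l\<in>set xs. \<not> t < l" using Cons.prems by auto
      then have "filter (\<lambda>l. t < l) xs = []" "filter (\<lambda>l. t < l) (take m' xs) = []"
        by (auto simp: filter_empty_conv dest: in_set_takeD)
      then show ?thesis using False Suc by simp
    qed (use Cons Suc in simp)
  qed simp
qed simp

text \<open>\<open>length (filter (\<lambda>l. t < l) xs)\<close> is the length of column \<open>t + 1\<close> of the Young diagram of \<open>xs\<close>.\<close>

lemma sum_min_length_filter_less_le:
  assumes "sorted_wrt (\<ge>) (xs :: nat list)"
  shows "(\<Sum>t<T. min m (length (filter (\<lambda>l. t < l) xs))) \<le> sum_list (take m xs)"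
proof -
  have "(\<Sum>t<T. min m (length (filter (\<lambda>l. t < l) xs)))
      = (\<Sum>t<T. length (filter (\<lambda>l. t < l) (take m xs)))"
    using length_filter_less_take[OF assms] by simp
  also have "\<dots> = sum_list (map (min T) (take m xs))" by (rule sum_length_filter_less)
  also have "\<dots> \<le> sum_list (take m xs)"
    using sum_list_mono[of "take m xs" "min T" "\<lambda>l. l"] by simp
  finally show ?thesis .
qed

lemma sub_dim_invariant_core_ge:
  fixes X :: "'a::field mat"
  assumes part: "is_partition ls n" and X: "X \<in> carrier_mat n n" and nilp: "X ^\<^sub>m K = 0\<^sub>m n n"
    and jnf: "jordan_nf X n_as" and blocks: "mset (map fst n_as) = mset ls"
    and W: "is_subspace n W"
  shows "sum_list (drop (n - sub_dim n W) ls) \<le> sub_dim n (invariant_core X n W)"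
proof -
  have sorted: "sorted_wrt (\<ge>) ls" and sum: "sum_list ls = n" using part unfolding is_partition_def by auto
  define m where "m = n - sub_dim n W"
  have rank: "mat_rank (X ^\<^sub>m t) + sum_list (map (min t) ls) = n" for t
    using mat_rank_add_kernel_dim[OF pow_carrier_mat[OF X, of t]]
    unfolding kernel_dim_pow_nilpotent[OF X nilp jnf blocks] .
  have drop: "int (mat_rank (X ^\<^sub>m t)) - int (mat_rank (X ^\<^sub>m Suc t)) = int (length (filter (\<lambda>l. t < l) ls))" for t
    using rank[of t] rank[of "Suc t"] sum_list_min_Suc[of t ls] by simp
  have "int n - int (sub_dim n (invariant_core X n W)) \<le> (\<Sum>t<K. min (int m) (int (length (filter (\<lambda>l. t < l) ls))))"
    using codim_invariant_core_le[OF X W nilp] unfolding drop m_def by simp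
  also have "\<dots> = int (\<Sum>t<K. min m (length (filter (\<lambda>l. t < l) ls)))" by (simp add: of_nat_sum of_nat_min)
  also have "\<dots> \<le> int (sum_list (take m ls))"
    unfolding of_nat_le_iff by (rule sum_min_length_filter_less_le[OF sorted])
  moreover have "sum_list (take m ls) + sum_list (drop m ls) = n"
    using sum sum_list_append[of "take m ls" "drop m ls"] by simp
  ultimately show ?thesis unfolding m_def by linarith
qed

section \<open>Leading principal submatrices and stable rank\<close>

definition coord_subspace :: "nat \<Rightarrow> nat \<Rightarrow> 'a::zero vec set" where
  "coord_subspace n i = {v \<in> carrier_vec n. \<forall>j. i \<le> j \<longrightarrow> j < n \<longrightarrow> v $ j = 0}"

lemma is_subspace_coord_subspace: "is_subspace n (coord_subspace n i :: 'a::field vec set)"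
  unfolding coord_subspace_def by (rule is_subspaceI) auto

lemma mat_kernel_pow_jordan_block_zero:
  "mat_kernel ((jordan_block n (0::'a::field)) ^\<^sub>m i) = coord_subspace n i"
proof -
  let ?J = "(jordan_block n (0::'a)) ^\<^sub>m i"
  have J: "?J = mat n n (\<lambda>(r, c). if c \<ge> r \<and> c - r = i then 1 else 0)" by (rule jordan_block_zero_pow)
  have row: "(?J *\<^sub>v v) $ r = (if r + i < n then v $ (r + i) else 0)"
    if v: "v \<in> carrier_vec n" and r: "r < n" for v r
  proof -
    have "(?J *\<^sub>v v) $ r = (\<Sum>c = 0..<n. (if c \<ge> r \<and> c - r = i then 1 else 0) * v $ c)"
      unfolding J using v r by (simp add: mult_mat_vec_def scalar_prod_def)
    also have "\<dots> = (\<Sum>c = 0..<n. (if c = r + i then v $ c else 0))" by (intro sum.cong) auto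
    finally show ?thesis by (simp add: sum.delta')
  qed
  have dim: "dim_col ?J = n" "dim_row ?J = n" by (simp_all add: jordan_block_def)
  show ?thesis
  proof (intro equalityI subsetI)
    fix v assume "v \<in> mat_kernel ?J"
    then have v: "v \<in> carrier_vec n" and z: "?J *\<^sub>v v = 0\<^sub>v n" unfolding mat_kernel_def dim by auto
    have "v $ j = 0" if "i \<le> j" "j < n" for j
    proof -
      have "(?J *\<^sub>v v) $ (j - i) = v $ j" using row[OF v, of "j - i"] that by simp
      then show ?thesis using z that by simp
    qed
    then show "v \<in> coord_subspace n i" unfolding coord_subspace_def using v by auto
  next
    fix v :: "'a vec" assume "v \<in> coord_subspace n i"
    then have v: "v \<in> carrier_vec n" and z: "\<And>j. i \<le> j \<Longrightarrow> j < n \<Longrightarrow> v $ j = 0"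
      unfolding coord_subspace_def by auto
    have "?J *\<^sub>v v = 0\<^sub>v n" by (intro eq_vecI) (use row[OF v] z in auto)
    then show "v \<in> mat_kernel ?J" unfolding mat_kernel_def dim using v by auto
  qed
qed

lemma sub_dim_coord_subspace:
  assumes "i \<le> n"
  shows "sub_dim n (coord_subspace n i :: 'a::field vec set) = i"
proof -
  have "dim_col ((jordan_block n (0::'a)) ^\<^sub>m i) = n" by (simp add: jordan_block_def)
  then show ?thesis
    using dim_kernel_zero_jordan_block_pow[where 'a='a, of n i] assms
      kernel_dim_eq_sub_dim[of "(jordan_block n (0::'a)) ^\<^sub>m i"]
    unfolding kernel_dim_def mat_kernel_pow_jordan_block_zero by simp
qed

lemma submatrix_lessThan:
  fixes X :: "'a mat"
  assumes X: "X \<in> carrier_mat n n" and i: "i \<le> n"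
  shows "submatrix X {..<i} {..<i} \<in> carrier_mat i i"
    and "\<And>r c. r < i \<Longrightarrow> c < i \<Longrightarrow> submatrix X {..<i} {..<i} $$ (r, c) = X $$ (r, c)"
proof -
  have rows: "{r. r < dim_row X \<and> r \<in> {..<i}} = {..<i}" and cols: "{r. r < dim_col X \<and> r \<in> {..<i}} = {..<i}"
    using X i by auto
  show "submatrix X {..<i} {..<i} \<in> carrier_mat i i" unfolding submatrix_def rows cols by simp
  have pick: "pick {..<i} r = r" if "r < i" for r
  proof -
    have "{a \<in> {..<i}. a < r} = {..<r}" using that by auto
    then show ?thesis using pick_card_in_set[of r "{..<i}"] that by simp
  qed
  show "submatrix X {..<i} {..<i} $$ (r, c) = X $$ (r, c)" if "r < i" "c < i" for r c
    using submatrix_index[of r X "{..<i}" c "{..<i}"] rows cols pick that by simp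
qed

definition truncation_mat :: "nat \<Rightarrow> nat \<Rightarrow> 'a::field mat" where
  "truncation_mat i n = mat i n (\<lambda>(r, c). if r = c then 1 else 0)"

lemma truncation_mat_carrier: "truncation_mat i n \<in> carrier_mat i n"
  unfolding truncation_mat_def by simp

lemma truncation_mat_mult_vec:
  assumes u: "u \<in> carrier_vec n" and i: "i \<le> n"
  shows "truncation_mat i n *\<^sub>v u = vec i (\<lambda>r. u $ r)"
proof (intro eq_vecI)
  fix r assume "r < dim_vec (vec i (\<lambda>r. u $ r))"
  then have r: "r < i" by simp
  have "(truncation_mat i n *\<^sub>v u) $ r = (\<Sum>c = 0..<n. (if r = c then 1 else 0) * u $ c)"
    unfolding truncation_mat_def using u r by (simp add: mult_mat_vec_def scalar_prod_def)
  also have "\<dots> = (\<Sum>c = 0..<n. (if r = c then u $ c else 0))" by (intro sum.cong) auto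
  also have "\<dots> = u $ r" using r i by (simp add: sum.delta)
  finally show "(truncation_mat i n *\<^sub>v u) $ r = vec i (\<lambda>r. u $ r) $ r" using r by simp
qed (simp add: truncation_mat_def)

lemma submatrix_mult_truncation:
  fixes X :: "'a::field mat"
  assumes X: "X \<in> carrier_mat n n" and i: "i \<le> n" and u: "u \<in> coord_subspace n i"
  shows "submatrix X {..<i} {..<i} *\<^sub>v (truncation_mat i n *\<^sub>v u) = truncation_mat i n *\<^sub>v (X *\<^sub>v u)"
proof -
  have uc: "u \<in> carrier_vec n" and uz: "\<And>j. i \<le> j \<Longrightarrow> j < n \<Longrightarrow> u $ j = 0"
    using u unfolding coord_subspace_def by auto
  note Y = submatrix_lessThan[OF X i]
  show ?thesis
  proof (intro eq_vecI)
    fix r assume "r < dim_vec (truncation_mat i n *\<^sub>v (X *\<^sub>v u))"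
    then have r: "r < i" by (simp add: truncation_mat_def)
    have "(submatrix X {..<i} {..<i} *\<^sub>v (truncation_mat i n *\<^sub>v u)) $ r = (\<Sum>c = 0..<i. X $$ (r, c) * u $ c)"
      using Y r uc i unfolding truncation_mat_mult_vec[OF uc i]
      by (auto simp: mult_mat_vec_def scalar_prod_def row_def intro!: sum.cong)
    \<comment> \<open>the coordinates of \<open>u\<close> beyond \<open>i\<close> vanish\<close>
    also have "\<dots> = (\<Sum>c = 0..<n. X $$ (r, c) * u $ c)"
      by (rule sum.mono_neutral_left) (use i uz in auto)
    also have "\<dots> = (truncation_mat i n *\<^sub>v (X *\<^sub>v u)) $ r"
      using X uc r i unfolding truncation_mat_mult_vec[OF mult_mat_vec_carrier[OF X uc] i]
      by (auto simp: mult_mat_vec_def scalar_prod_def row_def)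
    finally show "(submatrix X {..<i} {..<i} *\<^sub>v (truncation_mat i n *\<^sub>v u)) $ r
        = (truncation_mat i n *\<^sub>v (X *\<^sub>v u)) $ r" .
  qed (use Y(1) in \<open>simp add: truncation_mat_def\<close>)
qed

lemma pow_submatrix_mult_truncation:
  fixes X :: "'a::field mat"
  assumes X: "X \<in> carrier_mat n n" and i: "i \<le> n" and U: "U \<subseteq> coord_subspace n i"
    and inv: "\<And>u. u \<in> U \<Longrightarrow> X *\<^sub>v u \<in> U" and u: "u \<in> U"
  shows "submatrix X {..<i} {..<i} ^\<^sub>m k *\<^sub>v (truncation_mat i n *\<^sub>v u) = truncation_mat i n *\<^sub>v (X ^\<^sub>m k *\<^sub>v u)"
  using u
proof (induction k arbitrary: u)
  case 0
  then have uc: "u \<in> carrier_vec n" using U unfolding coord_subspace_def by auto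
  then have "truncation_mat i n *\<^sub>v u \<in> carrier_vec i" by (rule mult_mat_vec_carrier[OF truncation_mat_carrier])
  then show ?case using uc X submatrix_lessThan(1)[OF X i] by simp
next
  case (Suc k)
  let ?Y = "submatrix X {..<i} {..<i}" and ?R = "truncation_mat i n"
  have uc: "u \<in> carrier_vec n" using Suc.prems U unfolding coord_subspace_def by auto
  have "?Y ^\<^sub>m Suc k *\<^sub>v (?R *\<^sub>v u) = ?Y ^\<^sub>m k *\<^sub>v (?Y *\<^sub>v (?R *\<^sub>v u))"
    by (rule pow_mat_mult_vec_Suc(1)[OF submatrix_lessThan(1)[OF X i]])
      (rule mult_mat_vec_carrier[OF truncation_mat_carrier uc])
  also have "?Y *\<^sub>v (?R *\<^sub>v u) = ?R *\<^sub>v (X *\<^sub>v u)"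
    using submatrix_mult_truncation[OF X i] U Suc.prems by auto
  also have "?Y ^\<^sub>m k *\<^sub>v (?R *\<^sub>v (X *\<^sub>v u)) = ?R *\<^sub>v (X ^\<^sub>m k *\<^sub>v (X *\<^sub>v u))"
    using Suc.IH inv Suc.prems by auto
  also have "X ^\<^sub>m k *\<^sub>v (X *\<^sub>v u) = X ^\<^sub>m Suc k *\<^sub>v u"
    by (rule pow_mat_mult_vec_Suc(1)[OF X uc, symmetric])
  finally show ?case .
qed

lemma sub_dim_truncation_image:
  fixes U :: "'a::field vec set"
  assumes U: "is_subspace n U" "U \<subseteq> coord_subspace n i" and i: "i \<le> n"
  shows "sub_dim i ((\<lambda>v. truncation_mat i n *\<^sub>v v) ` U) = sub_dim n U"
proof -
  have "{v \<in> U. truncation_mat i n *\<^sub>v v = 0\<^sub>v i} \<subseteq> {0\<^sub>v n}"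
  proof
    fix v assume v: "v \<in> {v \<in> U. truncation_mat i n *\<^sub>v v = 0\<^sub>v i}"
    then have vc: "v \<in> carrier_vec n" and high: "\<And>j. i \<le> j \<Longrightarrow> j < n \<Longrightarrow> v $ j = 0"
      using U(2) unfolding coord_subspace_def by auto
    have "vec i (\<lambda>r. v $ r) = 0\<^sub>v i" using v truncation_mat_mult_vec[OF vc i] by auto
    then have "v $ j = 0" if "j < i" for j
    proof -
      have "vec i (\<lambda>r. v $ r) $ j = 0\<^sub>v i $ j" using \<open>vec i (\<lambda>r. v $ r) = 0\<^sub>v i\<close> by simp
      then show ?thesis using that by simp
    qed
    then have "v = 0\<^sub>v n" using high vc by (intro eq_vecI) (auto simp: not_less[symmetric])
    then show "v \<in> {0\<^sub>v n}" by simp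
  qed
  then have "{v \<in> U. truncation_mat i n *\<^sub>v v = 0\<^sub>v i} = {0\<^sub>v n}"
    using is_subspaceD(2)[OF U(1)] mult_mat_zero_vec[OF truncation_mat_carrier] by auto
  then show ?thesis
    using sub_dim_image_add_kernel[OF truncation_mat_carrier[of i n] U(1)] sub_dim_zero[of n, where 'a='a]
    by simp
qed

lemma pow_mat_eq_zero_mono:
  fixes A :: "'a::semiring_1 mat"
  assumes A: "A \<in> carrier_mat n n" and "A ^\<^sub>m K = 0\<^sub>m n n" and "K \<le> N"
  shows "A ^\<^sub>m N = 0\<^sub>m n n"
  using assms(3)
proof (induction N rule: dec_induct)
  case (step N)
  then show ?case using A by simp
qed (use assms(2) in simp)

lemma mat_rank_pow_Suc_le:
  fixes A :: "'a::field mat"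
  assumes A: "A \<in> carrier_mat k k"
  shows "mat_rank (A ^\<^sub>m Suc N) \<le> mat_rank (A ^\<^sub>m N)"
proof -
  have "(\<lambda>v. A ^\<^sub>m Suc N *\<^sub>v v) ` carrier_vec k \<subseteq> (\<lambda>v. A ^\<^sub>m N *\<^sub>v v) ` carrier_vec k"
    using pow_mat_mult_vec_Suc(1)[OF A] A by (auto simp del: pow_mat.simps)
  then show ?thesis unfolding mat_rank_eq_sub_dim_image[OF pow_carrier_mat[OF A]]
    by (intro sub_dim_mono is_subspace_image[OF pow_carrier_mat[OF A] is_subspace_carrier_vec])
qed

lemma stable_rank_eventually:
  fixes A :: "'a::field mat"
  assumes A: "A \<in> carrier_mat k k"
  obtains N where "\<And>m. N \<le> m \<Longrightarrow> mat_rank (A ^\<^sub>m m) = stable_rank A"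
proof -
  define r where "r m = mat_rank (A ^\<^sub>m m)" for m
  have dec: "decseq r" by (rule decseq_SucI) (simp add: r_def mat_rank_pow_Suc_le[OF A] del: pow_mat.simps)
  have "(LEAST x. x \<in> range r) \<in> range r" by (rule LeastI[of _ "r 0"]) simp
  then obtain N where N: "r N = (LEAST x. x \<in> range r)" by (auto simp del: pow_mat.simps)
  \<comment> \<open>a decreasing sequence of naturals is constant once it attains its minimum\<close>
  have const: "r m = r N" if "N \<le> m" for m
  proof (rule antisym)
    show "r m \<le> r N" by (rule decseqD[OF dec that])
    show "r N \<le> r m" unfolding N by (rule Least_le) simp
  qed
  have "stable_rank A = r N" unfolding stable_rank_def
  proof (rule the_equality)
    have "mat_rank (A ^\<^sub>m m) = r N" if "N \<le> m" for m
      using const[OF that] unfolding r_def .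
    then show "\<exists>N'. \<forall>m\<ge>N'. mat_rank (A ^\<^sub>m m) = r N" by blast
  next
    fix x assume "\<exists>N'. \<forall>m\<ge>N'. mat_rank (A ^\<^sub>m m) = x"
    then obtain N' where N': "\<forall>m\<ge>N'. mat_rank (A ^\<^sub>m m) = x" by blast
    have "x = r (max N N')" using N' max.cobounded2[of N' N] unfolding r_def by presburger
    also have "\<dots> = r N" by (rule const[OF max.cobounded1])
    finally show "x = r N" .
  qed
  show ?thesis
  proof (rule that)
    fix m assume "N \<le> m"
    then have "r m = stable_rank A" using const \<open>stable_rank A = r N\<close> by presburger
    then show "mat_rank (A ^\<^sub>m m) = stable_rank A" unfolding r_def .
  qed
qed

lemma stable_rank_le:
  fixes A :: "'a::field mat"
  assumes A: "A \<in> carrier_mat k k" and b: "\<And>N. K \<le> N \<Longrightarrow> mat_rank (A ^\<^sub>m N) \<le> b"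
  shows "stable_rank A \<le> b"
proof -
  obtain N where "\<And>m. N \<le> m \<Longrightarrow> mat_rank (A ^\<^sub>m m) = stable_rank A"
    using stable_rank_eventually[OF A] by blast
  then show ?thesis using b[of "max N K"] by simp
qed

lemma stable_rank_leading_submatrix_le:
  fixes X :: "'a::field mat"
  assumes X: "X \<in> carrier_mat n n" and nilp: "X ^\<^sub>m K = 0\<^sub>m n n" and i: "i \<le> n"
    and U: "is_subspace n U" "U \<subseteq> coord_subspace n i" and inv: "\<And>u. u \<in> U \<Longrightarrow> X *\<^sub>v u \<in> U"
  shows "stable_rank (submatrix X {..<i} {..<i}) \<le> i - sub_dim n U"
proof (rule stable_rank_le[OF submatrix_lessThan(1)[OF X i]])
  fix N assume N: "K \<le> N"
  let ?Y = "submatrix X {..<i} {..<i}" and ?R = "truncation_mat i n"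
  have YN: "?Y ^\<^sub>m N \<in> carrier_mat i i" using submatrix_lessThan(1)[OF X i] by simp
  \<comment> \<open>the truncation of \<open>U\<close> is killed by \<open>Y\<^sup>N\<close> because \<open>U\<close> is killed by \<open>X\<^sup>N\<close>\<close>
  have "(\<lambda>v. ?R *\<^sub>v v) ` U \<subseteq> mat_kernel (?Y ^\<^sub>m N)"
  proof
    fix w assume "w \<in> (\<lambda>v. ?R *\<^sub>v v) ` U"
    then obtain u where u: "u \<in> U" "w = ?R *\<^sub>v u" by auto
    then have uc: "u \<in> carrier_vec n" using is_subspaceD(1)[OF U(1)] by auto
    have "?Y ^\<^sub>m N *\<^sub>v w = ?R *\<^sub>v (0\<^sub>m n n *\<^sub>v u)"
      using pow_submatrix_mult_truncation[OF X i U(2) inv u(1)] pow_mat_eq_zero_mono[OF X nilp N] u(2)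
      by simp
    also have "\<dots> = 0\<^sub>v i"
      using zero_mat_mult_vec[OF uc] mult_mat_zero_vec[OF truncation_mat_carrier] by simp
    moreover have "w \<in> carrier_vec i" using u(2) mult_mat_vec_carrier[OF truncation_mat_carrier uc] by simp
    ultimately show "w \<in> mat_kernel (?Y ^\<^sub>m N)" unfolding mat_kernel_def using YN by auto
  qed
  then have "sub_dim i ((\<lambda>v. ?R *\<^sub>v v) ` U) \<le> sub_dim i (mat_kernel (?Y ^\<^sub>m N))"
    by (rule sub_dim_mono[OF is_subspace_image[OF truncation_mat_carrier U(1)] is_subspace_mat_kernel[OF YN]])
  moreover have "kernel_dim (?Y ^\<^sub>m N) = sub_dim i (mat_kernel (?Y ^\<^sub>m N))"
    unfolding kernel_dim_eq_sub_dim carrier_matD(2)[OF YN] ..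
  ultimately have "sub_dim n U \<le> kernel_dim (?Y ^\<^sub>m N)"
    using sub_dim_truncation_image[OF U i] by simp
  then show "mat_rank (?Y ^\<^sub>m N) \<le> i - sub_dim n U" using mat_rank_add_kernel_dim[OF YN] by simp
qed

theorem lemma2p1:
  fixes X :: "'a::alg_closed_field mat" and n i :: nat and ls :: "nat list"
    and n_as :: "(nat \<times> 'a) list"
  assumes part: "is_partition ls n"
    and X: "X \<in> carrier_mat n n"
    and nilp: "\<exists>k. X ^\<^sub>m k = 0\<^sub>m n n"
    and jnf: "jordan_nf X n_as"
    and blocks: "mset (map fst n_as) = mset ls"
    and i: "1 \<le> i" "i \<le> n - 1"
  shows "(\<forall>W. is_subspace n W \<and> sub_dim n W = i \<longrightarrow>
            (\<exists>U. is_subspace n U \<and> U \<subseteq> W \<and> (\<forall>u\<in>U. X *\<^sub>v u \<in> U) \<and>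
                 sub_dim n U \<ge> sum_list (drop (n - i) ls)))
       \<and> stable_rank (submatrix X {..<i} {..<i}) \<le> i - sum_list (drop (n - i) ls)"
proof -
  obtain K where K: "X ^\<^sub>m K = 0\<^sub>m n n" using nilp by blast
  note core_ge = sub_dim_invariant_core_ge[OF part X K jnf blocks]
  have "\<exists>U. is_subspace n U \<and> U \<subseteq> W \<and> (\<forall>u\<in>U. X *\<^sub>v u \<in> U) \<and> sub_dim n U \<ge> sum_list (drop (n - i) ls)"
    if W: "is_subspace n W" "sub_dim n W = i" for W
    using is_subspace_invariant_core[OF X W(1)] invariant_core_subset[OF X W(1)]
      invariant_core_closed[OF X W(1)] core_ge[OF W(1)] W(2) by blast
  moreover have "stable_rank (submatrix X {..<i} {..<i}) \<le> i - sum_list (drop (n - i) ls)"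
  proof -
    let ?E = "coord_subspace n i :: 'a vec set"
    have "i \<le> n" using i by simp
    then have "stable_rank (submatrix X {..<i} {..<i}) \<le> i - sub_dim n (invariant_core X n ?E)"
      using stable_rank_leading_submatrix_le[OF X K _ is_subspace_invariant_core[OF X is_subspace_coord_subspace]
          invariant_core_subset[OF X is_subspace_coord_subspace] invariant_core_closed[OF X is_subspace_coord_subspace]]
      by blast
    then show ?thesis
      using core_ge[OF is_subspace_coord_subspace[of n i]] sub_dim_coord_subspace[OF \<open>i \<le> n\<close>, where 'a='a]
      by simp
  qed
  ultimately show ?thesis by blast
qed

end
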